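(* Let $\mu>0$, $x>0$, $y>0$. For $n=0,1,2,\ldots$, if $F_\mu(x,y)>F_{\mu+n+1}(x,y)$ then $$P_{\mu}(x,y)<U_{\mu}^{(n)}(x,y)=\frac{\sum_{k=0}^n F_{\mu+k}(x,y)}{F_\mu(x,y)-F_{\mu+n+1}(x,y)}\,F_{\mu}(x,y).$$ The sequence $U_\mu^{(n)}(x,y)$ converges (to $P_\mu(x,y)$) as $n\to+\infty$.
   Context: $P_{\mu}(x,y)=x^{\frac12(1-\mu)}\int_0^{y} t^{\frac12(\mu-1)}e^{-t-x}I_{\mu-1}(2\sqrt{xt})\,dt$ for $\mu>0$, with $I_\nu$ the modified Bessel function of the first kind; $F_{\mu}(x,y)=(y/x)^{\mu/2}e^{-x-y}I_{\mu}(2\sqrt{xy})$. *)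

theory Defs
  imports "HOL-Analysis.Analysis"
begin

definition besselI :: "real \<Rightarrow> real \<Rightarrow> real" where
  "besselI \<nu> z = (\<Sum>k. (z / 2) powr (2 * real k + \<nu>) / (fact k * Gamma (real k + \<nu> + 1)))"

definition marcumP :: "real \<Rightarrow> real \<Rightarrow> real \<Rightarrow> real" where
  "marcumP \<mu> x y = x powr ((1 - \<mu>) / 2) *
     integral {0..y} (\<lambda>t. t powr ((\<mu> - 1) / 2) * exp (- t - x) * besselI (\<mu> - 1) (2 * sqrt (x * t)))"

definition marcumF :: "real \<Rightarrow> real \<Rightarrow> real \<Rightarrow> real" where
  "marcumF \<mu> x y = (y / x) powr (\<mu> / 2) * exp (- x - y) * besselI \<mu> (2 * sqrt (x * y))"

definition marcumU :: "real \<Rightarrow> nat \<Rightarrow> real \<Rightarrow> real \<Rightarrow> real" where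
  "marcumU \<mu> n x y = (\<Sum>k\<le>n. marcumF (\<mu> + real k) x y) /
     (marcumF \<mu> x y - marcumF (\<mu> + real n + 1) x y) * marcumF \<mu> x y"

end

theory Submission
  imports Defs
begin

text \<open>
  Let c k = F(mu + k). Writing the integrand of P(nu) as a power series in x t, the identity
  (t^nu I_nu)' = t^nu I_(nu-1) and the fundamental theorem of calculus give
  P(nu) = F(nu) + P(nu + 1); since P(nu) = O(y^nu / Gamma nu), this telescopes to P(mu) = sum_k c k.
  Comparing the Cauchy products of the series for F(nu - 1) F(nu + 1) and F(nu)^2 coefficientwise
  yields the Turan inequality F(nu - 1) F(nu + 1) < F(nu)^2: the sequence c is strictly
  log-concave. Hence the ratios c (k + 1) / c k decrease, so c (m + k) c 0 <= c m c k, strictly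
  for k = 1, and summing over k gives (P(mu) - sum_(k<m) c k) c 0 < c m P(mu), which rearranges
  to P(mu) < U^(m-1). Convergence of U^(n) follows from c n --> 0.
\<close>

lemma Gamma_plus1_pos: "(z::real) > 0 \<Longrightarrow> Gamma (z + 1) = z * Gamma z"
  by (metis Gamma_plus1 nonpos_Ints_cases of_int_le_0_iff not_le order_le_less_trans)

lemma Gamma_shift_ge: "(a::real) \<ge> 0 \<Longrightarrow> Gamma (a + 1) \<le> Gamma (real k + a + 1)"
proof (induction k)
  case (Suc k)
  have "1 * Gamma (real k + a + 1) \<le> (real k + a + 1) * Gamma (real k + a + 1)"
    using Suc.prems by (intro mult_right_mono) auto
  also have "\<dots> = Gamma (real (Suc k) + a + 1)"
    using Gamma_plus1_pos[of "real k + a + 1"] Suc.prems by (simp add: add_ac)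
  finally show ?case using Suc by simp
qed simp

lemma summable_power_div_Gamma:
  fixes w a :: real
  assumes "a > 0"
  shows "summable (\<lambda>n. w ^ n / Gamma (real n + a))"
proof (rule summable_ratio_test[where c="1/2" and N="nat \<lceil>2 * \<bar>w\<bar>\<rceil>"])
  fix n assume n: "n \<ge> nat \<lceil>2 * \<bar>w\<bar>\<rceil>"
  have pos: "real n + a > 0" "Gamma (real n + a) > 0" using assms by auto
  have "Gamma (real (Suc n) + a) = (real n + a) * Gamma (real n + a)"
    using Gamma_plus1_pos[OF pos(1)] by (simp add: add_ac)
  then have "norm (w ^ Suc n / Gamma (real (Suc n) + a))
      = \<bar>w\<bar> / (real n + a) * norm (w ^ n / Gamma (real n + a))"
    using pos by (simp add: abs_mult power_abs)
  also have "\<dots> \<le> 1/2 * norm (w ^ n / Gamma (real n + a))"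
    using n pos assms by (intro mult_right_mono) (auto simp: field_simps)
  finally show "norm (w ^ Suc n / Gamma (real (Suc n) + a)) \<le> 1/2 * norm (w ^ n / Gamma (real n + a))" .
qed simp

definition bessel_coeff :: "real \<Rightarrow> nat \<Rightarrow> real" where
  "bessel_coeff a k = 1 / (fact k * Gamma (real k + a + 1))"

definition bessel_series :: "real \<Rightarrow> real \<Rightarrow> real" where
  "bessel_series a w = (\<Sum>k. bessel_coeff a k * w ^ k)"

definition bessel_series_deriv :: "real \<Rightarrow> real \<Rightarrow> real" where
  "bessel_series_deriv a w = (\<Sum>k. diffs (bessel_coeff a) k * w ^ k)"

lemma bessel_coeff_pos: "a > -1 \<Longrightarrow> bessel_coeff a k > 0"
  unfolding bessel_coeff_def by simp

lemma summable_bessel_coeff: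
  assumes "a > -1"
  shows "summable (\<lambda>k. bessel_coeff a k * w ^ k)"
proof (rule summable_comparison_test')
  show "summable (\<lambda>k. \<bar>w\<bar> ^ k / Gamma (real k + (a + 1)))"
    using assms by (intro summable_power_div_Gamma) simp
  fix k :: nat
  have "1 * Gamma (real k + a + 1) \<le> fact k * Gamma (real k + a + 1)"
    using assms by (intro mult_right_mono) auto
  then show "norm (bessel_coeff a k * w ^ k) \<le> \<bar>w\<bar> ^ k / Gamma (real k + (a + 1))"
    using assms unfolding bessel_coeff_def
    by (auto simp: abs_mult power_abs add_ac intro!: divide_left_mono)
qed

lemma bessel_series_sums: "a > -1 \<Longrightarrow> (\<lambda>k. bessel_coeff a k * w ^ k) sums bessel_series a w"
  unfolding bessel_series_def by (intro summable_sums summable_bessel_coeff)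

lemma bessel_series_pos: "a > -1 \<Longrightarrow> w \<ge> 0 \<Longrightarrow> bessel_series a w > 0"
  unfolding bessel_series_def
  by (rule suminf_pos2[where i=0])
     (auto intro: summable_bessel_coeff simp: bessel_coeff_pos less_imp_le)

lemma bessel_series_mono:
  "a > -1 \<Longrightarrow> 0 \<le> w1 \<Longrightarrow> w1 \<le> w2 \<Longrightarrow> bessel_series a w1 \<le> bessel_series a w2"
  unfolding bessel_series_def
  by (rule suminf_le)
     (auto intro!: summable_bessel_coeff mult_left_mono power_mono simp: bessel_coeff_pos less_imp_le)

lemma bessel_series_le_exp:
  assumes "a \<ge> 0" "w \<ge> 0"
  shows "bessel_series a w \<le> exp w / Gamma (a + 1)"
proof (rule sums_le[OF _ bessel_series_sums])
  show "(\<lambda>k. w ^ k /\<^sub>R fact k / Gamma (a + 1)) sums (exp w / Gamma (a + 1))"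
    by (intro sums_divide exp_converges)
  fix k
  have "bessel_coeff a k * w ^ k = w ^ k / (fact k * Gamma (real k + a + 1))"
    by (simp add: bessel_coeff_def)
  also have "\<dots> \<le> w ^ k / (fact k * Gamma (a + 1))"
    using assms Gamma_shift_ge[of a k] by (intro divide_left_mono mult_left_mono mult_pos_pos) auto
  finally show "bessel_coeff a k * w ^ k \<le> w ^ k /\<^sub>R fact k / Gamma (a + 1)"
    by (simp add: divide_inverse mult_ac)
qed (use assms in simp)

lemma bessel_series_has_derivative:
  "a > -1 \<Longrightarrow> (bessel_series a has_real_derivative bessel_series_deriv a w) (at w)"
  unfolding bessel_series_def[abs_def] bessel_series_deriv_def
  by (intro termdiffs_strong_converges_everywhere summable_bessel_coeff)

lemma bessel_coeff_rec:
  assumes "\<nu> > 0"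
  shows "(\<nu> + real k) * bessel_coeff \<nu> k = bessel_coeff (\<nu> - 1) k"
proof -
  have "Gamma (real k + \<nu> + 1) = (\<nu> + real k) * Gamma (real k + \<nu>)"
    using Gamma_plus1_pos[of "real k + \<nu>"] assms by (simp add: add_ac)
  moreover have "real k + (\<nu> - 1) + 1 = real k + \<nu>" by simp
  moreover have "\<nu> + real k \<noteq> 0" using assms by simp
  ultimately show ?thesis
    unfolding bessel_coeff_def by (simp add: mult.left_commute)
qed

lemma bessel_series_rec:
  assumes "\<nu> > 0"
  shows "\<nu> * bessel_series \<nu> w + w * bessel_series_deriv \<nu> w = bessel_series (\<nu> - 1) w"
proof -
  define d where "d k = real k * bessel_coeff \<nu> k * w ^ k" for k
  have "(\<lambda>k. w * (diffs (bessel_coeff \<nu>) k * w ^ k)) sums (w * bessel_series_deriv \<nu> w)"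
    unfolding bessel_series_deriv_def using assms
    by (intro sums_mult summable_sums termdiff_converges_all summable_bessel_coeff) simp
  moreover have "(\<lambda>k. w * (diffs (bessel_coeff \<nu>) k * w ^ k)) = (\<lambda>k. d (Suc k))"
    by (auto simp: d_def diffs_def algebra_simps)
  ultimately have "(\<lambda>k. d (Suc k)) sums (w * bessel_series_deriv \<nu> w)" by simp
  then have "d sums (w * bessel_series_deriv \<nu> w + d 0)"
    by (rule sums_Suc_iff[THEN iffD1])
  then have "d sums (w * bessel_series_deriv \<nu> w)"
    by (simp add: d_def)
  then have "(\<lambda>k. \<nu> * (bessel_coeff \<nu> k * w ^ k) + d k)
      sums (\<nu> * bessel_series \<nu> w + w * bessel_series_deriv \<nu> w)"
    using assms by (intro sums_add sums_mult bessel_series_sums) simp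
  moreover have "(\<lambda>k. \<nu> * (bessel_coeff \<nu> k * w ^ k) + d k) = (\<lambda>k. bessel_coeff (\<nu> - 1) k * w ^ k)"
    by (simp add: d_def algebra_simps flip: bessel_coeff_rec[OF assms])
  moreover have "(\<lambda>k. bessel_coeff (\<nu> - 1) k * w ^ k) sums bessel_series (\<nu> - 1) w"
    using assms by (intro bessel_series_sums) simp
  ultimately show ?thesis using sums_unique2 by metis
qed

lemma besselI_eq_bessel_series:
  assumes "a > -1" "w > 0"
  shows "besselI a (2 * sqrt w) = w powr (a / 2) * bessel_series a w"
proof -
  have "(2 * sqrt w / 2) powr (2 * real k + a) = w powr (a / 2) * w ^ k" for k
  proof -
    have "(2 * sqrt w / 2) powr (2 * real k + a) = (w powr (1/2)) powr (2 * real k + a)"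
      using assms by (simp add: powr_half_sqrt)
    also have "\<dots> = w powr (real k + a / 2)" by (simp add: powr_powr algebra_simps)
    finally show ?thesis using assms by (simp add: powr_add powr_realpow)
  qed
  then have "besselI a (2 * sqrt w) = (\<Sum>k. w powr (a / 2) * (bessel_coeff a k * w ^ k))"
    unfolding besselI_def bessel_coeff_def by simp
  also have "\<dots> = w powr (a / 2) * bessel_series a w"
    using assms by (intro sums_unique[symmetric] sums_mult bessel_series_sums) simp
  finally show ?thesis .
qed

lemma marcumF_eq_bessel_series:
  assumes "a > -1" "x > 0" "y > 0"
  shows "marcumF a x y = exp (- x - y) * y powr a * bessel_series a (x * y)"
proof -
  have "(y / x) powr (a / 2) * (x * y) powr (a / 2) = (y * y) powr (a / 2)"
    using assms by (simp flip: powr_mult)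
  also have "\<dots> = y powr a"
    using assms by (simp add: powr_mult flip: powr_add)
  finally show ?thesis
    unfolding marcumF_def using assms by (simp add: besselI_eq_bessel_series mult_ac)
qed

lemma marcumF_pos: "a > -1 \<Longrightarrow> x > 0 \<Longrightarrow> y > 0 \<Longrightarrow> marcumF a x y > 0"
  using marcumF_eq_bessel_series[of a x y] bessel_series_pos[of a "x * y"] by simp

text \<open>marcum_kernel x (nu - 1) is the integrand of P(nu), and marcum_kernel x nu y = F(nu).\<close>

definition marcum_kernel :: "real \<Rightarrow> real \<Rightarrow> real \<Rightarrow> real" where
  "marcum_kernel x a t = exp (- x - t) * t powr a * bessel_series a (x * t)"

lemma marcum_kernel_nonneg: "a > -1 \<Longrightarrow> x \<ge> 0 \<Longrightarrow> t \<ge> 0 \<Longrightarrow> marcum_kernel x a t \<ge> 0"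
  unfolding marcum_kernel_def using bessel_series_pos[of a "x * t"] by simp

lemma marcum_kernel_has_derivative:
  assumes "\<nu> > 0" "t > 0"
  shows "(marcum_kernel x \<nu> has_real_derivative marcum_kernel x (\<nu> - 1) t - marcum_kernel x \<nu> t) (at t)"
proof -
  have "((\<lambda>t. bessel_series \<nu> (x * t)) has_real_derivative bessel_series_deriv \<nu> (x * t) * x) (at t)"
    using assms by (intro DERIV_chain2[OF bessel_series_has_derivative] derivative_eq_intros) auto
  then have "(marcum_kernel x \<nu> has_real_derivative
      exp (- x - t) * t powr \<nu> * (bessel_series_deriv \<nu> (x * t) * x) +
      (exp (- x - t) * (\<nu> * t powr (\<nu> - 1)) - exp (- x - t) * t powr \<nu>) * bessel_series \<nu> (x * t)) (at t)"
    unfolding marcum_kernel_def[abs_def] using assms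
    by (auto intro!: derivative_eq_intros)
  moreover have "t powr \<nu> = t * t powr (\<nu> - 1)"
    using powr_mult_base[of t "\<nu> - 1"] assms by simp
  moreover note bessel_series_rec[OF assms(1), of "x * t", symmetric]
  ultimately show ?thesis
    unfolding marcum_kernel_def by (simp add: algebra_simps)
qed

lemma continuous_on_marcum_kernel:
  assumes "\<nu> > 0"
  shows "continuous_on {0..y} (marcum_kernel x \<nu>)"
proof -
  have "continuous_on UNIV (bessel_series \<nu>)"
    using assms by (intro continuous_at_imp_continuous_on ballI DERIV_isCont[OF bessel_series_has_derivative]) simp
  then have "continuous_on {0..y} (\<lambda>t. bessel_series \<nu> (x * t))"
    by (rule continuous_on_compose2) (auto intro: continuous_on_mult_left continuous_on_id)
  moreover have "continuous_on {0..y} (\<lambda>t. t powr \<nu>)"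
    using assms by (intro continuous_on_powr' continuous_on_id continuous_on_const) auto
  ultimately show ?thesis
    unfolding marcum_kernel_def[abs_def]
    by (intro continuous_on_mult continuous_on_exp continuous_on_diff continuous_on_const continuous_on_id)
qed

lemma marcum_kernel_integral:
  assumes "\<nu> > 0" "y > 0"
  shows "(marcum_kernel x (\<nu> - 1) has_integral marcum_kernel x \<nu> y + integral {0..y} (marcum_kernel x \<nu>)) {0..y}"
proof -
  have "((\<lambda>t. marcum_kernel x (\<nu> - 1) t - marcum_kernel x \<nu> t) has_integral
      marcum_kernel x \<nu> y - marcum_kernel x \<nu> 0) {0..y}"
    using assms continuous_on_marcum_kernel[OF assms(1)] marcum_kernel_has_derivative[OF assms(1)]
    by (intro fundamental_theorem_of_calculus_interior)
       (auto simp: has_real_derivative_iff_has_vector_derivative[symmetric])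
  moreover have "(marcum_kernel x \<nu> has_integral integral {0..y} (marcum_kernel x \<nu>)) {0..y}"
    using assms by (intro integrable_integral integrable_continuous_interval continuous_on_marcum_kernel)
  ultimately have "((\<lambda>t. (marcum_kernel x (\<nu> - 1) t - marcum_kernel x \<nu> t) + marcum_kernel x \<nu> t)
      has_integral marcum_kernel x \<nu> y - marcum_kernel x \<nu> 0 + integral {0..y} (marcum_kernel x \<nu>)) {0..y}"
    by (rule has_integral_add)
  moreover have "marcum_kernel x \<nu> 0 = 0"
    using assms by (simp add: marcum_kernel_def)
  ultimately show ?thesis by simp
qed

lemma marcumP_integrand_eq_kernel:
  assumes "\<nu> > 0" "x > 0" "t \<ge> 0"
  shows "x powr ((1 - \<nu>) / 2) * (t powr ((\<nu> - 1) / 2) * exp (- t - x) * besselI (\<nu> - 1) (2 * sqrt (x * t)))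
    = marcum_kernel x (\<nu> - 1) t"
proof (cases "t = 0")
  case False
  have "x powr ((1 - \<nu>) / 2) * x powr ((\<nu> - 1) / 2) = 1"
    using assms by (simp add: add_divide_distrib[symmetric] flip: powr_add)
  moreover have "t powr ((\<nu> - 1) / 2) * t powr ((\<nu> - 1) / 2) = t powr (\<nu> - 1)"
    by (simp flip: powr_add)
  ultimately show ?thesis
    using assms False
    by (simp add: besselI_eq_bessel_series powr_mult marcum_kernel_def algebra_simps)
qed (simp add: marcum_kernel_def)

lemma marcumP_eq_integral_kernel:
  assumes "\<nu> > 0" "x > 0"
  shows "marcumP \<nu> x y = integral {0..y} (marcum_kernel x (\<nu> - 1))"
  unfolding marcumP_def integral_mult_right[symmetric]
  using assms by (intro integral_cong) (simp add: marcumP_integrand_eq_kernel)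

lemma marcumP_rec:
  assumes "\<nu> > 0" "x > 0" "y > 0"
  shows "marcumP \<nu> x y = marcumF \<nu> x y + marcumP (\<nu> + 1) x y"
proof -
  have "marcumP (\<nu> + 1) x y = integral {0..y} (marcum_kernel x \<nu>)"
    using marcumP_eq_integral_kernel[of "\<nu> + 1" x y] assms by simp
  moreover have "marcumF \<nu> x y = marcum_kernel x \<nu> y"
    using marcumF_eq_bessel_series[of \<nu> x y] assms by (simp add: marcum_kernel_def)
  ultimately show ?thesis
    using marcumP_eq_integral_kernel[OF assms(1,2)] marcum_kernel_integral[OF assms(1,3)]
    by (simp add: integral_unique)
qed

lemma marcumP_nonneg:
  assumes "\<nu> > 0" "x > 0" "y > 0"
  shows "marcumP \<nu> x y \<ge> 0"
  unfolding marcumP_eq_integral_kernel[OF assms(1,2)]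
  using assms marcum_kernel_integral[OF assms(1,3)]
  by (intro integral_nonneg marcum_kernel_nonneg) auto

lemma marcumP_le:
  assumes "\<nu> \<ge> 1" "x > 0" "y > 0"
  shows "marcumP \<nu> x y \<le> exp (x * y) * (y powr \<nu> / Gamma \<nu>)"
proof -
  define M where "M = y powr (\<nu> - 1) * bessel_series (\<nu> - 1) (x * y)"
  have "marcum_kernel x (\<nu> - 1) t \<le> M" if "t \<in> {0..y}" for t
  proof -
    have "marcum_kernel x (\<nu> - 1) t \<le> 1 * y powr (\<nu> - 1) * bessel_series (\<nu> - 1) (x * y)"
      unfolding marcum_kernel_def using assms that
      by (intro mult_mono powr_mono2 bessel_series_mono mult_left_mono)
         (auto intro: less_imp_le[OF bessel_series_pos])
    then show ?thesis by (simp add: M_def)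
  qed
  moreover have "marcum_kernel x (\<nu> - 1) integrable_on {0..y}"
    using marcum_kernel_integral[of \<nu> y x] assms by auto
  ultimately have "integral {0..y} (marcum_kernel x (\<nu> - 1)) \<le> integral {0..y} (\<lambda>_. M)"
    by (intro integral_le) auto
  then have "marcumP \<nu> x y \<le> integral {0..y} (\<lambda>_. M)"
    using marcumP_eq_integral_kernel[of \<nu> x y] assms by simp
  also have "\<dots> = y * y powr (\<nu> - 1) * bessel_series (\<nu> - 1) (x * y)"
    using assms by (simp add: M_def)
  also have "\<dots> \<le> y * y powr (\<nu> - 1) * (exp (x * y) / Gamma \<nu>)"
    using bessel_series_le_exp[of "\<nu> - 1" "x * y"] assms by (intro mult_left_mono) auto
  also have "y * y powr (\<nu> - 1) = y powr \<nu>"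
    using powr_mult_base[of y "\<nu> - 1"] assms by simp
  finally show ?thesis by (simp add: mult_ac)
qed

lemma marcumP_tendsto_zero:
  assumes "\<nu> > 0" "x > 0" "y > 0"
  shows "(\<lambda>n. marcumP (\<nu> + real n) x y) \<longlonglongrightarrow> 0"
proof (rule tendsto_sandwich[of "\<lambda>_. 0" _ _ "\<lambda>n. exp (x * y) * y powr \<nu> * (y ^ n / Gamma (real n + \<nu>))"])
  show "\<forall>\<^sub>F n in sequentially. 0 \<le> marcumP (\<nu> + real n) x y"
    using assms by (intro always_eventually allI marcumP_nonneg) auto
  show "\<forall>\<^sub>F n in sequentially.
      marcumP (\<nu> + real n) x y \<le> exp (x * y) * y powr \<nu> * (y ^ n / Gamma (real n + \<nu>))"
  proof (rule eventually_sequentiallyI[of 1])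
    fix n :: nat assume "n \<ge> 1"
    then show "marcumP (\<nu> + real n) x y \<le> exp (x * y) * y powr \<nu> * (y ^ n / Gamma (real n + \<nu>))"
      using marcumP_le[of "\<nu> + real n" x y] assms by (simp add: powr_add powr_realpow add_ac)
  qed
  show "(\<lambda>n. exp (x * y) * y powr \<nu> * (y ^ n / Gamma (real n + \<nu>))) \<longlonglongrightarrow> 0"
    using assms by (intro tendsto_mult_right_zero summable_LIMSEQ_zero summable_power_div_Gamma)
qed simp

lemma marcumF_sums_marcumP:
  assumes "\<nu> > 0" "x > 0" "y > 0"
  shows "(\<lambda>k. marcumF (\<nu> + real k) x y) sums marcumP \<nu> x y"
proof -
  have "(\<Sum>k<n. marcumF (\<nu> + real k) x y) = marcumP \<nu> x y - marcumP (\<nu> + real n) x y" for n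
  proof (induction n)
    case (Suc n)
    then show ?case
      using marcumP_rec[of "\<nu> + real n" x y] assms by (simp add: add_ac)
  qed simp
  then show ?thesis
    unfolding sums_def using tendsto_diff[OF tendsto_const marcumP_tendsto_zero[OF assms]] by simp
qed

text \<open>N! times the coefficient of w^N in bessel_series (alpha - 1) w * bessel_series (beta - 1) w.\<close>

definition binomial_Gamma_sum :: "nat \<Rightarrow> real \<Rightarrow> real \<Rightarrow> real" where
  "binomial_Gamma_sum N \<alpha> \<beta> = (\<Sum>i\<le>N. real (N choose i) / (Gamma (\<alpha> + real i) * Gamma (\<beta> + real (N - i))))"

lemma binomial_Gamma_sum_Suc:
  "binomial_Gamma_sum (Suc N) \<alpha> \<beta> = binomial_Gamma_sum N \<alpha> (\<beta> + 1) + binomial_Gamma_sum N (\<alpha> + 1) \<beta>"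
proof -
  define f where "f i = 1 / (Gamma (\<alpha> + real i) * Gamma (\<beta> + real (Suc N - i)))" for i
  have "binomial_Gamma_sum (Suc N) \<alpha> \<beta> = (\<Sum>i\<le>Suc N. real (Suc N choose i) * f i)"
    by (simp add: binomial_Gamma_sum_def f_def)
  also have "\<dots> = f 0 + (\<Sum>i\<le>N. real (N choose Suc i) * f (Suc i)) + (\<Sum>i\<le>N. real (N choose i) * f (Suc i))"
    by (subst sum.atMost_Suc_shift) (simp add: algebra_simps sum.distrib)
  also have "f 0 + (\<Sum>i\<le>N. real (N choose Suc i) * f (Suc i)) = (\<Sum>i\<le>Suc N. real (N choose i) * f i)"
    by (subst sum.atMost_Suc_shift) simp
  also have "\<dots> = (\<Sum>i\<le>N. real (N choose i) * f i)"
    by simp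
  also have "\<dots> = binomial_Gamma_sum N \<alpha> (\<beta> + 1)"
    unfolding binomial_Gamma_sum_def f_def by (intro sum.cong refl) (simp add: Suc_diff_le algebra_simps)
  also have "(\<Sum>i\<le>N. real (N choose i) * f (Suc i)) = binomial_Gamma_sum N (\<alpha> + 1) \<beta>"
    unfolding binomial_Gamma_sum_def f_def by (intro sum.cong refl) (simp add: algebra_simps)
  finally show ?thesis .
qed

lemma binomial_Gamma_sum_closed:
  assumes "\<alpha> > 0" "\<beta> > 0" "\<alpha> + \<beta> > 1"
  shows "binomial_Gamma_sum N \<alpha> \<beta> = Gamma (\<alpha> + \<beta> + 2 * real N - 1) /
           (Gamma (\<alpha> + real N) * Gamma (\<beta> + real N) * Gamma (\<alpha> + \<beta> + real N - 1))"
  using assms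
proof (induction N arbitrary: \<alpha> \<beta>)
  case 0
  then have "Gamma (\<alpha> + \<beta> - 1) > 0" by simp
  then show ?case by (simp add: binomial_Gamma_sum_def)
next
  case (Suc N)
  define A B C D where "A = Gamma (\<alpha> + real N)" and "B = Gamma (\<beta> + real N)"
    and "C = Gamma (\<alpha> + \<beta> + real N)" and "D = Gamma (\<alpha> + \<beta> + 2 * real N)"
  have pos: "A > 0" "B > 0" "C > 0" "\<alpha> + real N > 0" "\<beta> + real N > 0"
    using Suc.prems by (auto simp: A_def B_def C_def)
  have A1: "Gamma (\<alpha> + 1 + real N) = (\<alpha> + real N) * A"
    using Gamma_plus1_pos[of "\<alpha> + real N"] pos unfolding A_def by (simp add: add_ac)
  have B1: "Gamma (\<beta> + 1 + real N) = (\<beta> + real N) * B"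
    using Gamma_plus1_pos[of "\<beta> + real N"] pos unfolding B_def by (simp add: add_ac)
  have D1: "Gamma (\<alpha> + \<beta> + 2 * real (Suc N) - 1) = (\<alpha> + \<beta> + 2 * real N) * D"
    using Gamma_plus1_pos[of "\<alpha> + \<beta> + 2 * real N"] pos unfolding D_def by (simp add: algebra_simps)
  have "binomial_Gamma_sum N \<alpha> (\<beta> + 1) = D / (A * ((\<beta> + real N) * B) * C)"
    using Suc.IH[of \<alpha> "\<beta> + 1"] Suc.prems B1 unfolding A_def C_def D_def by (simp add: algebra_simps)
  moreover have "binomial_Gamma_sum N (\<alpha> + 1) \<beta> = D / (((\<alpha> + real N) * A) * B * C)"
    using Suc.IH[of "\<alpha> + 1" \<beta>] Suc.prems A1 unfolding B_def C_def D_def by (simp add: algebra_simps)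
  moreover have "Gamma (\<alpha> + \<beta> + 2 * real (Suc N) - 1) /
      (Gamma (\<alpha> + real (Suc N)) * Gamma (\<beta> + real (Suc N)) * Gamma (\<alpha> + \<beta> + real (Suc N) - 1))
      = (\<alpha> + \<beta> + 2 * real N) * D / (((\<alpha> + real N) * A) * ((\<beta> + real N) * B) * C)"
    unfolding D1 using A1 B1 unfolding C_def by (simp add: algebra_simps)
  moreover have "D / (A * (b * B) * C) + D / ((a * A) * B * C) = (a + b) * D / ((a * A) * (b * B) * C)"
    if "a > 0" "b > 0" for a b
    using that pos by (simp add: field_simps)
  ultimately show ?case
    using pos unfolding binomial_Gamma_sum_Suc by (simp add: add_ac)
qed

lemma binomial_Gamma_sum_shift_less:
  assumes "\<nu> > 0"
  shows "binomial_Gamma_sum N \<nu> (\<nu> + 2) < binomial_Gamma_sum N (\<nu> + 1) (\<nu> + 1)"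
proof -
  define p G K where "p = \<nu> + real N" and "G = Gamma (\<nu> + real N)"
    and "K = Gamma (2 * \<nu> + 2 * real N + 1) / Gamma (2 * \<nu> + real N + 1)"
  have pos: "p > 0" "G > 0" "K > 0" using assms by (auto simp: p_def G_def K_def)
  have G1: "Gamma (\<nu> + 1 + real N) = p * G"
    using Gamma_plus1_pos[of "\<nu> + real N"] pos unfolding p_def G_def by (simp add: add_ac)
  have G2: "Gamma (\<nu> + 2 + real N) = (p + 1) * (p * G)"
    using Gamma_plus1_pos[of "\<nu> + real N + 1"] pos G1 unfolding p_def by (simp add: add_ac)
  have "binomial_Gamma_sum N \<nu> (\<nu> + 2) = K / (G * ((p + 1) * (p * G)))"
    using binomial_Gamma_sum_closed[of \<nu> "\<nu> + 2" N] assms G2 unfolding K_def G_def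
    by (simp add: algebra_simps)
  also have "\<dots> < K / ((p * G) * (p * G))"
  proof (rule divide_strict_left_mono)
    show "(p * G) * (p * G) < G * ((p + 1) * (p * G))"
      using pos by (simp add: algebra_simps)
  qed (use pos in auto)
  also have "\<dots> = binomial_Gamma_sum N (\<nu> + 1) (\<nu> + 1)"
    using binomial_Gamma_sum_closed[of "\<nu> + 1" "\<nu> + 1" N] assms G1 unfolding K_def
    by (simp add: algebra_simps)
  finally show ?thesis .
qed

lemma bessel_series_mult_sums:
  assumes "a > -1" "b > -1" "w \<ge> 0"
  shows "(\<lambda>N. w ^ N / fact N * binomial_Gamma_sum N (a + 1) (b + 1)) sums (bessel_series a w * bessel_series b w)"
proof -
  have abs_eq: "(\<lambda>k. \<bar>bessel_coeff c k * w ^ k\<bar>) = (\<lambda>k. bessel_coeff c k * w ^ k)" if "c > -1" for c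
    using bessel_coeff_pos[OF that] assms by (simp add: abs_mult abs_of_pos)
  have "(\<lambda>N. \<Sum>i\<le>N. (bessel_coeff a i * w ^ i) * (bessel_coeff b (N - i) * w ^ (N - i)))
      sums (bessel_series a w * bessel_series b w)"
    unfolding bessel_series_def using assms
    by (intro Cauchy_product_sums) (simp_all add: abs_eq summable_bessel_coeff)
  moreover have "(bessel_coeff a i * w ^ i) * (bessel_coeff b (N - i) * w ^ (N - i))
      = w ^ N / fact N * (real (N choose i) / (Gamma (a + 1 + real i) * Gamma (b + 1 + real (N - i))))"
    if "i \<le> N" for i N
  proof -
    have "w ^ i * w ^ (N - i) = w ^ N" using that by (simp flip: power_add)
    moreover have "Gamma (a + 1 + real i) > 0" "Gamma (b + 1 + real (N - i)) > 0" using assms by auto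
    ultimately show ?thesis
      unfolding bessel_coeff_def binomial_fact[OF that] by (simp add: field_simps add_ac)
  qed
  ultimately show ?thesis
    unfolding binomial_Gamma_sum_def by (simp add: sum_distrib_left)
qed

lemma bessel_series_turan:
  assumes "\<nu> > 0" "w \<ge> 0"
  shows "bessel_series (\<nu> - 1) w * bessel_series (\<nu> + 1) w < bessel_series \<nu> w * bessel_series \<nu> w"
proof -
  define t where "t N = w ^ N / fact N * binomial_Gamma_sum N (\<nu> + 1) (\<nu> + 1)
      - w ^ N / fact N * binomial_Gamma_sum N \<nu> (\<nu> + 2)" for N
  have "t sums (bessel_series \<nu> w * bessel_series \<nu> w - bessel_series (\<nu> - 1) w * bessel_series (\<nu> + 1) w)"
    unfolding t_def using assms bessel_series_mult_sums[of "\<nu> - 1" "\<nu> + 1" w]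
    by (intro sums_diff bessel_series_mult_sums) (simp_all add: add_ac)
  moreover have "0 < suminf t"
  proof (rule suminf_pos2[where i=0])
    show "summable t" using calculation by (simp add: sums_iff)
    show "0 \<le> t N" for N
      using binomial_Gamma_sum_shift_less[OF assms(1), of N] assms
      by (auto simp: t_def intro!: divide_right_mono mult_left_mono)
    show "0 < t 0"
      using binomial_Gamma_sum_shift_less[OF assms(1), of 0] by (simp add: t_def)
  qed
  ultimately show ?thesis by (simp add: sums_iff)
qed

lemma marcumF_turan:
  assumes "\<nu> > 0" "x > 0" "y > 0"
  shows "marcumF (\<nu> - 1) x y * marcumF (\<nu> + 1) x y < marcumF \<nu> x y * marcumF \<nu> x y"
proof -
  define E where "E = exp (- x - y) * exp (- x - y) * (y powr \<nu> * y powr \<nu>)"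
  have "y powr (\<nu> - 1) * y powr (\<nu> + 1) = y powr \<nu> * y powr \<nu>"
    by (simp flip: powr_add)
  then have "marcumF (\<nu> - 1) x y * marcumF (\<nu> + 1) x y
      = E * (bessel_series (\<nu> - 1) (x * y) * bessel_series (\<nu> + 1) (x * y))"
    using marcumF_eq_bessel_series[of "\<nu> - 1" x y] marcumF_eq_bessel_series[of "\<nu> + 1" x y] assms
    by (simp add: E_def mult_ac)
  also have "\<dots> < E * (bessel_series \<nu> (x * y) * bessel_series \<nu> (x * y))"
    using bessel_series_turan[of \<nu> "x * y"] assms by (intro mult_strict_left_mono) (auto simp: E_def)
  also have "\<dots> = marcumF \<nu> x y * marcumF \<nu> x y"
    using marcumF_eq_bessel_series[of \<nu> x y] assms by (simp add: E_def mult_ac)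
  finally show ?thesis .
qed

context
  fixes c :: "nat \<Rightarrow> real"
  assumes pos: "\<And>i. c i > 0"
    and log_concave: "\<And>i. c i * c (Suc (Suc i)) < c (Suc i) * c (Suc i)"
begin

lemma log_concave_ratio_less: "i < j \<Longrightarrow> c (Suc j) / c j < c (Suc i) / c i"
proof (induction j rule: less_Suc_induct)
  case (1 i)
  show ?case
    using log_concave[of i] pos[of i] pos[of "Suc i"] by (simp add: divide_simps mult_ac)
qed (rule less_trans)

lemma log_concave_mult_le: "m \<ge> 1 \<Longrightarrow> c (m + k) * c 0 \<le> c m * c k"
proof (induction k)
  case (Suc k)
  have "c (m + Suc k) * c 0 = c (Suc (m + k)) / c (m + k) * (c (m + k) * c 0)"
    using pos[of "m + k"] by simp
  also have "\<dots> \<le> c (Suc k) / c k * (c m * c k)"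
    by (rule mult_mono)
       (use Suc log_concave_ratio_less[of k "m + k"] pos in \<open>auto intro: less_imp_le\<close>)
  also have "\<dots> = c m * c (Suc k)"
    using pos[of k] by simp
  finally show ?case .
qed simp

lemma log_concave_mult_less: "m \<ge> 1 \<Longrightarrow> c (m + 1) * c 0 < c m * c 1"
  using log_concave_ratio_less[of 0 m] pos[of 0] pos[of m] by (simp add: divide_simps mult_ac)

lemma log_concave_tail_less:
  assumes "c sums s" "(\<lambda>k. c (m + k)) sums r" "m \<ge> 1"
  shows "r * c 0 < c m * s"
proof -
  have "(\<lambda>k. c m * c k - c (m + k) * c 0) sums (c m * s - r * c 0)"
    using assms by (intro sums_diff sums_mult sums_mult2)
  moreover have "0 < (\<Sum>k. c m * c k - c (m + k) * c 0)"
    using calculation log_concave_mult_le[OF assms(3)] log_concave_mult_less[OF assms(3)]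
    by (intro suminf_pos2[where i=1]) (auto simp: sums_iff)
  ultimately show ?thesis by (simp add: sums_iff)
qed

lemma log_concave_partial_sum_bound:
  assumes "c sums s" "c (Suc n) < c 0"
  shows "s < (\<Sum>k\<le>n. c k) / (c 0 - c (Suc n)) * c 0"
proof -
  have "(\<lambda>k. c (Suc n + k)) sums (s - (\<Sum>k\<le>n. c k))"
    using sums_split_initial_segment[OF assms(1), of "Suc n"] by (simp add: add.commute lessThan_Suc_atMost)
  then have "(s - (\<Sum>k\<le>n. c k)) * c 0 < c (Suc n) * s"
    using assms(1) by (intro log_concave_tail_less) auto
  then show ?thesis
    using assms(2) by (simp add: pos_less_divide_eq algebra_simps)
qed

end

lemma partial_sum_ratio_tendsto:
  fixes c :: "nat \<Rightarrow> real"
  assumes "c sums s" "c 0 \<noteq> 0"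
  shows "(\<lambda>n. (\<Sum>k\<le>n. c k) / (c 0 - c (Suc n)) * c 0) \<longlonglongrightarrow> s"
proof -
  have "(\<lambda>n. \<Sum>k<Suc n. c k) \<longlonglongrightarrow> s"
    using assms(1) unfolding sums_def by (rule LIMSEQ_Suc)
  moreover have "(\<lambda>n. c (Suc n)) \<longlonglongrightarrow> 0"
    using assms(1) by (intro LIMSEQ_Suc summable_LIMSEQ_zero sums_summable)
  ultimately have "(\<lambda>n. (\<Sum>k\<le>n. c k) / (c 0 - c (Suc n)) * c 0) \<longlonglongrightarrow> s / (c 0 - 0) * c 0"
    using assms(2) by (intro tendsto_intros) (simp_all add: lessThan_Suc_atMost)
  then show ?thesis
    using assms(2) by simp
qed

theorem proposition3:
  fixes \<mu> x y :: real
  assumes "\<mu> > 0" and "x > 0" and "y > 0"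
  shows "(\<forall>n::nat. marcumF \<mu> x y > marcumF (\<mu> + real n + 1) x y
            \<longrightarrow> marcumP \<mu> x y < marcumU \<mu> n x y)
         \<and> (\<lambda>n. marcumU \<mu> n x y) \<longlonglongrightarrow> marcumP \<mu> x y"
proof -
  define c where "c k = marcumF (\<mu> + real k) x y" for k
  have U: "marcumU \<mu> n x y = (\<Sum>k\<le>n. c k) / (c 0 - c (Suc n)) * c 0" for n
    by (simp add: marcumU_def c_def add_ac)
  have pos: "c k > 0" for k
    unfolding c_def using assms by (intro marcumF_pos) auto
  have log_concave: "c i * c (Suc (Suc i)) < c (Suc i) * c (Suc i)" for i
    using marcumF_turan[of "\<mu> + real (Suc i)" x y] assms by (simp add: c_def add_ac)
  have sums: "c sums marcumP \<mu> x y"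
    unfolding c_def using assms by (rule marcumF_sums_marcumP)
  have "marcumF \<mu> x y = c 0" "marcumF (\<mu> + real n + 1) x y = c (Suc n)" for n
    by (simp_all add: c_def add_ac)
  then show ?thesis
    unfolding U using log_concave_partial_sum_bound[OF pos log_concave sums]
      partial_sum_ratio_tendsto[OF sums] pos[of 0] by simp
qed

end
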